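(* Let $z\in(0,+\infty)^{d_1}\times\{0\}^{d_2}$. Then: (1) the maps $\alpha\mapsto\mathbb{E}[S^{\mathcal C}_\alpha(z)]$ and $\alpha\mapsto\sigma^{\mathcal C}_\alpha(z)$ are non-increasing on $[0,\infty)$; (2) $\lim_{\alpha\to0}\mathbb{E}[S^{\mathcal C}_\alpha(z)]=\mathbb{E}[S^{\mathcal C}_0(z)]$; (3) $\lim_{\alpha\to0}\sigma^{\mathcal C}_\alpha(z)=\sigma^{\mathcal C}_0(z)$.
   Context: Fix $d_1\ge1$, $d_2\ge0$. $\xi$ is a Poisson point process on $\mathbb{R}^{d_1}\times\mathbb{Z}^{d_2}$ with intensity Lebesgue $\otimes$ counting measure; $\mathrm{Proj}^{d_2}$ is the projection on the $\mathbb{Z}^{d_2}$ coordinates. For $\alpha\ge0$: $x\prec_\alpha y$ iff $x_i+\alpha^{1/d_1}<y_i$ for all $i\le d_1$; $x\preceq y$ iff $x_i\le y_i$ for all $i\le d_1$. For $z\in(0,+\infty)^{d_1}\times\{0\}^{d_2}$, $\mathcal{C}_\alpha(z)$ is the set of finite sequences $s=(w(1),\dots,w(k))$, $k\ge0$, of points of $\xi$ with $0\preceq w(1)\prec_\alpha\cdots\prec_\alpha w(k)\prec_\alpha z$; with $w(0)=0,w(k+1)=z$, $V(s)=\sum_{i=1}^{k+1}\|\mathrm{Proj}^{d_2}(w(i))-\mathrm{Proj}^{d_2}(w(i-1))\|_1$, $R(s)=k$, $S^{\mathcal C}_\alpha(z)=\sup_{s\in\mathcal{C}_\alpha(z)}(R(s)-V(s))$,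 and $\sigma^{\mathcal C}_\alpha(z)=\lim_{\lambda\to\infty}\frac1\lambda\mathbb{E}[S^{\mathcal C}_\alpha(\lambda z)]=\sup_{\lambda>0}\frac1\lambda\mathbb{E}[S^{\mathcal C}_\alpha(\lambda z)]\in(0,\infty]$. *)

theory Defs
  imports "HOL-Probability.Probability"
begin

text \<open>Points of R^d1 x Z^d2. The R^d1 part is real^'d1 (d1 = CARD('d1) >= 1);
  the Z^d2 part is a function nat => int which vanishes at indices >= d2.\<close>

type_synonym 'd1 pt = "(real ^ 'd1) \<times> (nat \<Rightarrow> int)"

definition latt :: "nat \<Rightarrow> (nat \<Rightarrow> int) set" where
  "latt d2 = {k. \<forall>j\<ge>d2. k j = 0}"

definition intensity :: "nat \<Rightarrow> 'd1::finite pt set \<Rightarrow> ennreal" where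
  "intensity d2 A = (\<integral>\<^sup>+ k. emeasure lborel {x. (x, k) \<in> A} \<partial>count_space (latt d2))"

definition pt_meas_sets :: "nat \<Rightarrow> 'd1::finite pt set set" where
  "pt_meas_sets d2 = {A. A \<subseteq> UNIV \<times> latt d2 \<and> (\<forall>k. {x. (x, k) \<in> A} \<in> sets lborel)}"

definition count_in :: "('w \<Rightarrow> 'd1::finite pt set) \<Rightarrow> 'd1 pt set \<Rightarrow> 'w \<Rightarrow> nat" where
  "count_in \<xi> A \<omega> = card (\<xi> \<omega> \<inter> A)"

definition poisson_pp :: "nat \<Rightarrow> 'w measure \<Rightarrow> ('w \<Rightarrow> 'd1::finite pt set) \<Rightarrow> bool" where
  "poisson_pp d2 M \<xi> \<longleftrightarrow>
     prob_space M \<and>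
     (\<forall>\<omega>\<in>space M. \<xi> \<omega> \<subseteq> UNIV \<times> latt d2) \<and>
     (\<forall>A\<in>pt_meas_sets d2. intensity d2 A < \<infinity> \<longrightarrow>
        count_in \<xi> A \<in> measurable M (count_space UNIV) \<and>
        (AE \<omega> in M. finite (\<xi> \<omega> \<inter> A)) \<and>
        (\<forall>n::nat. measure M {\<omega>\<in>space M. count_in \<xi> A \<omega> = n}
            = exp (- enn2real (intensity d2 A)) * enn2real (intensity d2 A) ^ n / fact n)) \<and>
     (\<forall>I::nat set. \<forall>A. finite I \<longrightarrow> (\<forall>i\<in>I. A i \<in> pt_meas_sets d2 \<and> intensity d2 (A i) < \<infinity>)
        \<longrightarrow> disjoint_family_on A I
        \<longrightarrow> prob_space.indep_vars M (\<lambda>_. count_space UNIV) (\<lambda>i. count_in \<xi> (A i)) I)"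

definition prec :: "real \<Rightarrow> 'd1::finite pt \<Rightarrow> 'd1 pt \<Rightarrow> bool" where
  "prec \<alpha> p q \<longleftrightarrow> (\<forall>i. fst p $ i + \<alpha> powr (1 / real CARD('d1)) < fst q $ i)"

definition preceq :: "'d1::finite pt \<Rightarrow> 'd1 pt \<Rightarrow> bool" where
  "preceq p q \<longleftrightarrow> (\<forall>i. fst p $ i \<le> fst q $ i)"

definition origin :: "'d1::finite pt" where "origin = (0, \<lambda>_. 0)"

definition zpt :: "real ^ 'd1 \<Rightarrow> 'd1::finite pt" where "zpt z = (z, \<lambda>_. 0)"

definition chains :: "real \<Rightarrow> 'd1::finite pt set \<Rightarrow> real ^ 'd1 \<Rightarrow> 'd1 pt list set" where
  "chains \<alpha> P z = {ws. set ws \<subseteq> P \<and> (ws \<noteq> [] \<longrightarrow> preceq origin (hd ws))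
                      \<and> successively (prec \<alpha>) (ws @ [zpt z])}"

definition l1dist :: "nat \<Rightarrow> (nat \<Rightarrow> int) \<Rightarrow> (nat \<Rightarrow> int) \<Rightarrow> real" where
  "l1dist d2 k l = (\<Sum>j<d2. real_of_int \<bar>k j - l j\<bar>)"

definition Vcost :: "nat \<Rightarrow> real ^ 'd1 \<Rightarrow> 'd1::finite pt list \<Rightarrow> real" where
  "Vcost d2 z ws = (let p = origin # ws @ [zpt z] in
      sum_list (map (\<lambda>(a, b). l1dist d2 (snd a) (snd b)) (zip p (tl p))))"

text \<open>S^C_alpha(z) (nonnegative since the empty chain gives 0).\<close>
definition S_C :: "nat \<Rightarrow> real \<Rightarrow> 'd1::finite pt set \<Rightarrow> real ^ 'd1 \<Rightarrow> ennreal" where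
  "S_C d2 \<alpha> P z = (SUP ws\<in>chains \<alpha> P z. ennreal (real (length ws) - Vcost d2 z ws))"

definition ES :: "nat \<Rightarrow> 'w measure \<Rightarrow> ('w \<Rightarrow> 'd1::finite pt set) \<Rightarrow> real \<Rightarrow> real ^ 'd1 \<Rightarrow> ennreal" where
  "ES d2 M \<xi> \<alpha> z = (\<integral>\<^sup>+ \<omega>. S_C d2 \<alpha> (\<xi> \<omega>) z \<partial>M)"

definition sigma_C :: "nat \<Rightarrow> 'w measure \<Rightarrow> ('w \<Rightarrow> 'd1::finite pt set) \<Rightarrow> real \<Rightarrow> real ^ 'd1 \<Rightarrow> ennreal" where
  "sigma_C d2 M \<xi> \<alpha> z = (SUP t\<in>{0<..}. ES d2 M \<xi> \<alpha> (t *\<^sub>R z) / ennreal t)"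

end

theory Submission
  imports Defs
begin

(* Monotonicity in alpha holds pathwise, since C_beta(z) is contained in C_alpha(z) for
   alpha <= beta.  For the continuity at 0 it suffices that E S_0 <= sup_n E S_(1/n):
   a chain for alpha = 0 has strictly increasing coordinates, hence a uniform gap, so it is
   also a chain for all small alpha > 0.  To exchange sup_n and expectation by monotone
   convergence, S_alpha is bounded below by a countable supremum over chains of occupied grid
   cells, which is measurable; on the almost sure event that every grid cell contains only
   finitely many points, these minorants still approximate S_0 from below.  The statement
   for sigma follows by commuting suprema. *)

lemma prec_antimono:
  assumes "0 \<le> \<alpha>" "\<alpha> \<le> \<beta>" "prec \<beta> p q"
  shows "prec \<alpha> p q"
proof -
  have "\<alpha> powr (1 / real CARD('a)) \<le> \<beta> powr (1 / real CARD('a))"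
    using assms by (intro powr_mono2) auto
  with assms(3) show ?thesis
    unfolding prec_def by (meson add_left_mono le_less_trans)
qed

lemma chains_antimono:
  assumes "0 \<le> \<alpha>" "\<alpha> \<le> \<beta>"
  shows "chains \<beta> P z \<subseteq> chains \<alpha> P z"
  unfolding chains_def using successively_mono prec_antimono[OF assms] by blast

lemma S_C_antimono:
  assumes "0 \<le> \<alpha>" "\<alpha> \<le> \<beta>"
  shows "S_C d2 \<beta> P z \<le> S_C d2 \<alpha> P z"
  unfolding S_C_def by (rule SUP_subset_mono[OF chains_antimono[OF assms] order_refl])

lemma ES_antimono:
  assumes "0 \<le> \<alpha>" "\<alpha> \<le> \<beta>"
  shows "ES d2 M \<xi> \<beta> z \<le> ES d2 M \<xi> \<alpha> z"
  unfolding ES_def by (intro nn_integral_mono S_C_antimono[OF assms])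

lemma sigma_C_antimono:
  assumes "0 \<le> \<alpha>" "\<alpha> \<le> \<beta>"
  shows "sigma_C d2 M \<xi> \<beta> z \<le> sigma_C d2 M \<xi> \<alpha> z"
  unfolding sigma_C_def
  by (intro SUP_mono) (auto intro!: divide_right_mono_ennreal ES_antimono[OF assms])

lemma tendsto_at_right_0_antimono_SUP:
  fixes f :: "real \<Rightarrow> 'a::{complete_linorder, linorder_topology}"
  assumes antimono: "\<And>\<alpha> \<beta>. 0 \<le> \<alpha> \<Longrightarrow> \<alpha> \<le> \<beta> \<Longrightarrow> f \<beta> \<le> f \<alpha>"
    and SUP: "f 0 = (SUP n. f (1 / real (Suc n)))"
  shows "(f \<longlongrightarrow> f 0) (at_right 0)"
proof (rule order_tendstoI)
  fix y assume "y < f 0"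
  then obtain n where n: "y < f (1 / real (Suc n))"
    using SUP by (auto simp: less_SUP_iff)
  have "y < f x" if "0 < x" "x < 1 / real (Suc n)" for x
    using n antimono[of x "1 / real (Suc n)"] that by auto
  then show "\<forall>\<^sub>F x in at_right 0. y < f x"
    unfolding eventually_at_right_field by (intro exI[of _ "1 / real (Suc n)"]) auto
next
  fix y assume "f 0 < y"
  have "f x < y" if "0 < x" for x
    using antimono[of 0 x] that \<open>f 0 < y\<close> by (auto intro: le_less_trans)
  then show "\<forall>\<^sub>F x in at_right 0. f x < y"
    using eventually_at_right_less[of "0::real"] by (rule eventually_mono[rotated])
qed

lemma successively_list_all2:
  assumes "list_all2 Q xs ys" "successively R ys"
    and "\<And>a b c d. Q a c \<Longrightarrow> Q b d \<Longrightarrow> R c d \<Longrightarrow> R' a b"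
  shows "successively R' xs"
  using assms(1,2)
proof (induction rule: list_all2_induct)
  case (Cons x xs y ys)
  moreover have "xs \<noteq> [] \<Longrightarrow> Q (hd xs) (hd ys)"
    using Cons.hyps(2) by (cases xs; cases ys) auto
  ultimately show ?case
    using assms(3) by (auto simp: successively_Cons list_all2_Nil list_all2_Nil2)
qed simp

lemma successively_less_uniform_gap:
  fixes xs :: "(real ^ 'n) list"
  assumes "successively (\<lambda>x y. \<forall>i. x $ i < y $ i) xs"
  shows "\<exists>\<delta>>0. successively (\<lambda>x y. \<forall>i. x $ i + \<delta> \<le> y $ i) xs"
  using assms
proof (induction xs rule: induct_list012)
  case (3 x y xs)
  then obtain \<delta> where \<delta>: "\<delta> > 0" "successively (\<lambda>x y. \<forall>i. x $ i + \<delta> \<le> y $ i) (y # xs)"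
    by auto
  define \<delta>' where "\<delta>' = Min (range (\<lambda>i. y $ i - x $ i))"
  have "\<delta>' > 0"
    using "3.prems" by (auto simp: \<delta>'_def)
  have "\<delta>' \<le> y $ i - x $ i" for i
    unfolding \<delta>'_def by (rule Min_le) auto
  then have "\<forall>i. x $ i + min \<delta> \<delta>' \<le> y $ i"
    by (smt (verit))
  moreover have "successively (\<lambda>x y. \<forall>i. x $ i + min \<delta> \<delta>' \<le> y $ i) (y # xs)"
    using \<delta>(2) by (rule successively_mono) (smt (verit))
  ultimately show ?case
    using \<delta>(1) \<open>\<delta>' > 0\<close> by (intro exI[of _ "min \<delta> \<delta>'"]) auto
qed (auto intro: exI[of _ 1])

lemma ex_inverse_Suc_powr_less:
  fixes p \<epsilon> :: real
  assumes "0 < p" "0 < \<epsilon>"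
  shows "\<exists>n. (1 / real (Suc n)) powr p < \<epsilon>"
proof -
  obtain n where n: "inverse (real (Suc n)) < \<epsilon> powr (1 / p)"
    using reals_Archimedean[of "\<epsilon> powr (1 / p)"] assms by auto
  have "(1 / real (Suc n)) powr p < (\<epsilon> powr (1 / p)) powr p"
    using n assms by (intro powr_less_mono2) (auto simp: field_simps)
  also have "\<dots> = \<epsilon>" using assms by (simp add: powr_powr)
  finally show ?thesis ..
qed

lemma floor_mult_divide_bounds:
  fixes x m :: real
  assumes "0 < m"
  shows "of_int \<lfloor>x * m\<rfloor> / m \<le> x" "x < (of_int \<lfloor>x * m\<rfloor> + 1) / m"
    and "x - 1 / m < of_int \<lfloor>x * m\<rfloor> / m" "(of_int \<lfloor>x * m\<rfloor> + 1) / m \<le> x + 1 / m"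
  using of_int_floor_le[of "x * m"] real_of_int_floor_add_one_gt[of "x * m"] assms
  by (simp_all add: divide_simps)

definition lattice_point :: "nat \<Rightarrow> int list \<Rightarrow> nat \<Rightarrow> int" where
  "lattice_point d2 ks = (\<lambda>j. if j < d2 \<and> j < length ks then ks ! j else 0)"

lemma lattice_point_in_latt: "lattice_point d2 ks \<in> latt d2"
  unfolding lattice_point_def latt_def by auto

lemma lattice_point_map: "k \<in> latt d2 \<Longrightarrow> lattice_point d2 (map k [0..<d2]) = k"
  unfolding lattice_point_def latt_def by (auto simp: fun_eq_iff)

definition grid_lo :: "nat \<Rightarrow> ('d1::finite \<Rightarrow> int) \<Rightarrow> real ^ 'd1" where
  "grid_lo m v = (\<chi> i. of_int (v i) / real m)"

definition grid_hi :: "nat \<Rightarrow> ('d1::finite \<Rightarrow> int) \<Rightarrow> real ^ 'd1" where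
  "grid_hi m v = (\<chi> i. (of_int (v i) + 1) / real m)"

definition grid_box :: "nat \<Rightarrow> ('d1::finite \<Rightarrow> int) \<Rightarrow> (real ^ 'd1) set" where
  "grid_box m v = {x. \<forall>i. grid_lo m v $ i \<le> x $ i \<and> x $ i < grid_hi m v $ i}"

text \<open>The index (v, ks) names the cell of mesh 1/m with lower corner v/m in the continuous
  coordinates and lattice coordinate ks; the index type is countable.\<close>
definition grid_cell :: "nat \<Rightarrow> nat \<Rightarrow> ('d1::finite \<Rightarrow> int) \<times> int list \<Rightarrow> 'd1 pt set" where
  "grid_cell d2 m e = grid_box m (fst e) \<times> {lattice_point d2 (snd e)}"

lemma grid_cell_iff:
  "x \<in> grid_cell d2 m e \<longleftrightarrow> fst x \<in> grid_box m (fst e) \<and> snd x = lattice_point d2 (snd e)"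
  unfolding grid_cell_def by (cases x) auto

lemma grid_box_sets: "grid_box m v \<in> sets lborel"
proof -
  have "grid_box m v = {x\<in>space lborel. \<forall>i\<in>UNIV. grid_lo m v $ i \<le> x $ i \<and> x $ i < grid_hi m v $ i}"
    unfolding grid_box_def by auto
  also have "\<dots> \<in> sets lborel" by measurable
  finally show ?thesis .
qed

lemma emeasure_grid_box_finite: "emeasure lborel (grid_box m v) < \<infinity>"
proof -
  have "grid_box m v \<subseteq> cbox (grid_lo m v) (grid_hi m v)"
    unfolding grid_box_def by (auto simp: mem_box_cart less_imp_le)
  then have "emeasure lborel (grid_box m v) \<le> emeasure lborel (cbox (grid_lo m v) (grid_hi m v))"
    by (intro emeasure_mono) auto
  then show ?thesis using emeasure_lborel_cbox_finite le_less_trans by blast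
qed

lemma grid_cell_pt_meas_sets: "grid_cell d2 m e \<in> pt_meas_sets d2"
  unfolding pt_meas_sets_def grid_cell_def
  using lattice_point_in_latt[of d2 "snd e"] grid_box_sets[of m "fst e"] by auto

lemma intensity_grid_cell: "intensity d2 (grid_cell d2 m e) = emeasure lborel (grid_box m (fst e))"
proof -
  have "emeasure lborel {x. (x, k) \<in> grid_cell d2 m e}
      = emeasure lborel (grid_box m (fst e)) * indicator {lattice_point d2 (snd e)} k" for k
    unfolding grid_cell_def by (auto simp: indicator_def)
  then show ?thesis
    unfolding intensity_def using lattice_point_in_latt[of d2 "snd e"]
    by (simp add: nn_integral_cmult_indicator emeasure_count_space_finite)
qed

lemma grid_cell_intensity_finite: "intensity d2 (grid_cell d2 m e) < \<infinity>"
  unfolding intensity_grid_cell by (rule emeasure_grid_box_finite)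

lemma poisson_pp_finite_intensityD:
  assumes "poisson_pp d2 M \<xi>" "A \<in> pt_meas_sets d2" "intensity d2 A < \<infinity>"
  shows "count_in \<xi> A \<in> measurable M (count_space UNIV)" "AE \<omega> in M. finite (\<xi> \<omega> \<inter> A)"
proof -
  from assms(1) have "\<forall>A\<in>pt_meas_sets d2. intensity d2 A < \<infinity> \<longrightarrow>
      count_in \<xi> A \<in> measurable M (count_space UNIV) \<and> (AE \<omega> in M. finite (\<xi> \<omega> \<inter> A))"
    unfolding poisson_pp_def by (elim conjE) (intro ballI impI, simp)
  with assms(2,3) show "count_in \<xi> A \<in> measurable M (count_space UNIV)" "AE \<omega> in M. finite (\<xi> \<omega> \<inter> A)"
    by simp_all
qed

lemma poisson_pp_AE_finite_grid_cells:
  assumes "poisson_pp d2 M \<xi>"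
  shows "AE \<omega> in M. \<forall>m e. finite (\<xi> \<omega> \<inter> grid_cell d2 m e)"
  unfolding AE_all_countable
  by (intro allI poisson_pp_finite_intensityD(2)[OF assms grid_cell_pt_meas_sets grid_cell_intensity_finite])

lemma Vcost_cong_snd:
  assumes "map snd ws = map snd ws'"
  shows "Vcost d2 z ws = Vcost d2 z ws'"
proof -
  have snd_steps: "map (\<lambda>(a, b). l1dist d2 (snd a) (snd b)) (zip p (tl p))
      = map (\<lambda>(a, b). l1dist d2 a b) (zip (map snd p) (tl (map snd p)))" for p :: "'a pt list"
    by (simp add: zip_map_map map_tl[symmetric] case_prod_beta)
  show ?thesis unfolding Vcost_def Let_def snd_steps using assms by simp
qed

definition grid_chain :: "real \<Rightarrow> real ^ 'd1 \<Rightarrow> nat \<Rightarrow> (('d1::finite \<Rightarrow> int) \<times> int list) list \<Rightarrow> bool" where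
  "grid_chain \<alpha> z m t \<longleftrightarrow>
     (t \<noteq> [] \<longrightarrow> (\<forall>i. 0 \<le> grid_lo m (fst (hd t)) $ i)) \<and>
     successively (\<lambda>c d. \<forall>i. snd c $ i + \<alpha> powr (1 / real CARD('d1)) < fst d $ i)
       (map (\<lambda>e. (grid_lo m (fst e), grid_hi m (fst e))) t @ [(z, z)])"

definition occupied :: "nat \<Rightarrow> ('w \<Rightarrow> 'd1::finite pt set) \<Rightarrow> nat \<Rightarrow> (('d1 \<Rightarrow> int) \<times> int list) list \<Rightarrow> 'w \<Rightarrow> bool" where
  "occupied d2 \<xi> m t \<omega> \<longleftrightarrow> (\<forall>e\<in>set t. 0 < count_in \<xi> (grid_cell d2 m e) \<omega>)"

definition grid_value :: "nat \<Rightarrow> real ^ 'd1 \<Rightarrow> (('d1::finite \<Rightarrow> int) \<times> int list) list \<Rightarrow> ennreal" where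
  "grid_value d2 z t = ennreal (real (length t) - Vcost d2 z (map (\<lambda>e. (0, lattice_point d2 (snd e))) t))"

text \<open>A countable supremum of measurable functions, unlike S_C.  Occupancy is read off
  count_in, i.e. a cardinality, which is 0 on infinite sets: this is why grid_S recovers
  S_C 0 only where all cells contain finitely many points.\<close>
definition grid_S :: "nat \<Rightarrow> ('w \<Rightarrow> 'd1::finite pt set) \<Rightarrow> real \<Rightarrow> real ^ 'd1 \<Rightarrow> 'w \<Rightarrow> ennreal" where
  "grid_S d2 \<xi> \<alpha> z \<omega> =
     (SUP (m, t). if grid_chain \<alpha> z m t \<and> occupied d2 \<xi> m t \<omega> then grid_value d2 z t else 0)"

lemma grid_S_measurable:
  assumes "poisson_pp d2 M \<xi>"
  shows "grid_S d2 \<xi> \<alpha> z \<in> borel_measurable M"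
proof -
  have "{\<omega>\<in>space M. 0 < count_in \<xi> (grid_cell d2 m e) \<omega>} \<in> sets M" for m e
    using poisson_pp_finite_intensityD(1)[OF assms grid_cell_pt_meas_sets grid_cell_intensity_finite]
    by measurable
  then have "{\<omega>\<in>space M. occupied d2 \<xi> m t \<omega>} \<in> sets M" for m t
    unfolding occupied_def by (intro sets.sets_Collect_finite_All) auto
  then show ?thesis
    unfolding grid_S_def by (intro borel_measurable_SUP) (auto intro: measurable_If)
qed

lemma grid_chain_antimono:
  assumes "0 \<le> \<alpha>" "\<alpha> \<le> \<beta>" "grid_chain \<beta> z m t"
  shows "grid_chain \<alpha> z m t"
proof -
  have "\<alpha> powr (1 / real CARD('a)) \<le> \<beta> powr (1 / real CARD('a))"
    using assms by (intro powr_mono2) auto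
  then have "x + \<alpha> powr (1 / real CARD('a)) < y" if "x + \<beta> powr (1 / real CARD('a)) < y" for x y
    using that by linarith
  with assms(3) show ?thesis
    unfolding grid_chain_def by (blast intro: successively_mono)
qed

lemma grid_S_antimono:
  assumes "0 \<le> \<alpha>" "\<alpha> \<le> \<beta>"
  shows "grid_S d2 \<xi> \<beta> z \<omega> \<le> grid_S d2 \<xi> \<alpha> z \<omega>"
  unfolding grid_S_def
  apply (rule SUP_mono)
  subgoal for mt
    by (intro bexI[of _ mt]) (auto split: prod.split dest: grid_chain_antimono[OF assms])
  done

lemma chain_of_grid_chain:
  fixes z :: "real ^ 'd1::finite"
  assumes "grid_chain \<alpha> z m t" and p: "\<And>e. e \<in> set t \<Longrightarrow> p e \<in> P \<inter> grid_cell d2 m e"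
  shows "map p t \<in> chains \<alpha> P z"
proof -
  let ?corners = "map (\<lambda>e. (grid_lo m (fst e), grid_hi m (fst e))) t @ [(z, z)]"
  let ?Q = "\<lambda>a c. \<forall>i. fst c $ i \<le> fst a $ i \<and> fst a $ i \<le> snd c $ i"
  have "list_all2 ?Q (map p t @ [zpt z]) ?corners"
    using p by (auto simp: list.rel_map grid_cell_iff grid_box_def zpt_def less_imp_le
        intro!: list_all2_appendI list.rel_refl_strong)
  moreover have "successively (\<lambda>c d. \<forall>i. snd c $ i + \<alpha> powr (1 / real CARD('d1)) < fst d $ i) ?corners"
    using assms(1) unfolding grid_chain_def by simp
  ultimately have "successively (prec \<alpha>) (map p t @ [zpt z])"
  proof (rule successively_list_all2)
    fix a b :: "'d1 pt" and c d :: "(real ^ 'd1) \<times> (real ^ 'd1)"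
    assume "?Q a c" "?Q b d" "\<forall>i. snd c $ i + \<alpha> powr (1 / real CARD('d1)) < fst d $ i"
    then have "fst a $ i + \<alpha> powr (1 / real CARD('d1)) < fst b $ i" for i
      by (smt (verit))
    then show "prec \<alpha> a b"
      unfolding prec_def by blast
  qed
  moreover have "preceq origin (hd (map p t))" if "t \<noteq> []"
  proof -
    have "grid_lo m (fst (hd t)) $ i \<le> fst (p (hd t)) $ i" for i
      using p[of "hd t"] that by (auto simp: grid_cell_iff grid_box_def)
    then show ?thesis
      using assms(1) that unfolding grid_chain_def preceq_def origin_def
      by (auto simp: hd_map intro: order_trans)
  qed
  ultimately show ?thesis
    using p unfolding chains_def by auto
qed

lemma grid_value_le_S_C:
  fixes \<xi> :: "'w \<Rightarrow> 'd1::finite pt set"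
  assumes chain: "grid_chain \<alpha> z m t" and occ: "occupied d2 \<xi> m t \<omega>"
  shows "grid_value d2 z t \<le> S_C d2 \<alpha> (\<xi> \<omega>) z"
proof -
  have "\<exists>q. q \<in> \<xi> \<omega> \<inter> grid_cell d2 m e" if "e \<in> set t" for e
    using occ that unfolding occupied_def count_in_def by (force simp: card_gt_0_iff)
  then obtain p where p: "\<And>e. e \<in> set t \<Longrightarrow> p e \<in> \<xi> \<omega> \<inter> grid_cell d2 m e"
    by metis
  have "map snd (map (\<lambda>e. (0::real ^ 'd1, lattice_point d2 (snd e))) t) = map snd (map p t)"
    using p by (auto simp: grid_cell_iff)
  from Vcost_cong_snd[OF this]
  have "grid_value d2 z t = ennreal (real (length (map p t)) - Vcost d2 z (map p t))"
    unfolding grid_value_def by simp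
  also have "\<dots> \<le> S_C d2 \<alpha> (\<xi> \<omega>) z"
    unfolding S_C_def by (rule SUP_upper[OF chain_of_grid_chain[OF chain p]])
  finally show ?thesis .
qed

lemma grid_S_le_S_C: "grid_S d2 \<xi> \<alpha> z \<omega> \<le> S_C d2 \<alpha> (\<xi> \<omega>) z"
  unfolding grid_S_def by (auto intro!: SUP_least grid_value_le_S_C[where \<xi> = \<xi> and \<omega> = \<omega>])

definition grid_index :: "nat \<Rightarrow> nat \<Rightarrow> 'd1::finite pt \<Rightarrow> ('d1 \<Rightarrow> int) \<times> int list" where
  "grid_index d2 m w = ((\<lambda>i. \<lfloor>fst w $ i * real m\<rfloor>), map (snd w) [0..<d2])"

lemma grid_index_corners:
  assumes "0 < m"
  shows "fst w $ i - 1 / real m < grid_lo m (fst (grid_index d2 m w)) $ i"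
    and "grid_lo m (fst (grid_index d2 m w)) $ i \<le> fst w $ i"
    and "fst w $ i < grid_hi m (fst (grid_index d2 m w)) $ i"
    and "grid_hi m (fst (grid_index d2 m w)) $ i \<le> fst w $ i + 1 / real m"
  using floor_mult_divide_bounds[of "real m" "fst w $ i"] assms
  by (simp_all add: grid_index_def grid_lo_def grid_hi_def)

lemma mem_grid_cell_grid_index:
  assumes "0 < m" "snd w \<in> latt d2"
  shows "w \<in> grid_cell d2 m (grid_index d2 m w)"
  using grid_index_corners[OF assms(1)] assms(2)
  by (auto simp: grid_cell_iff grid_box_def lattice_point_map grid_index_def)

lemma grid_chain_grid_index:
  fixes z :: "real ^ 'd1::finite"
  assumes gap: "successively (\<lambda>a b. \<forall>i. fst a $ i + \<delta> \<le> fst b $ i) (ws @ [zpt z])"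
    and start: "ws \<noteq> [] \<Longrightarrow> preceq origin (hd ws)"
    and "0 < m" and small: "2 / real m + \<alpha> powr (1 / real CARD('d1)) \<le> \<delta>"
  shows "grid_chain \<alpha> z m (map (grid_index d2 m) ws)"
proof -
  let ?corners = "map (\<lambda>e. (grid_lo m (fst e), grid_hi m (fst e))) (map (grid_index d2 m) ws) @ [(z, z)]"
  let ?Q = "\<lambda>c a. \<forall>i. fst a $ i - 1 / real m < fst c $ i \<and> snd c $ i \<le> fst a $ i + 1 / real m"
  have "list_all2 ?Q ?corners (ws @ [zpt z])"
    using grid_index_corners[OF \<open>0 < m\<close>] \<open>0 < m\<close>
    by (auto simp: list.rel_map zpt_def intro!: list_all2_appendI list.rel_refl_strong)
  then have "successively (\<lambda>c d. \<forall>i. snd c $ i + \<alpha> powr (1 / real CARD('d1)) < fst d $ i) ?corners"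
  proof (rule successively_list_all2[OF _ gap])
    fix c d :: "(real ^ 'd1) \<times> (real ^ 'd1)" and a b :: "'d1 pt"
    assume "?Q c a" "?Q d b" "\<forall>i. fst a $ i + \<delta> \<le> fst b $ i"
    then have "snd c $ i \<le> fst a $ i + 1 / real m" "fst b $ i - 1 / real m < fst d $ i"
      and "fst a $ i + \<delta> \<le> fst b $ i" for i
      by auto
    moreover have "2 / real m = 1 / real m + 1 / real m" by simp
    ultimately have "snd c $ i + \<alpha> powr (1 / real CARD('d1)) < fst d $ i" for i
      using small by (smt (verit))
    then show "\<forall>i. snd c $ i + \<alpha> powr (1 / real CARD('d1)) < fst d $ i" ..
  qed
  moreover have "0 \<le> grid_lo m (fst (grid_index d2 m (hd ws))) $ i" if "ws \<noteq> []" for i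
    using start[OF that]
    by (simp add: preceq_def origin_def grid_index_def grid_lo_def)
  ultimately show ?thesis
    unfolding grid_chain_def by (simp add: hd_map)
qed

lemma chains_0_uniform_gap:
  assumes "ws \<in> chains 0 P z"
  obtains \<delta> where "\<delta> > 0" "successively (\<lambda>a b. \<forall>i. fst a $ i + \<delta> \<le> fst b $ i) (ws @ [zpt z])"
proof -
  have "successively (\<lambda>x y. \<forall>i. x $ i < y $ i) (map fst (ws @ [zpt z]))"
    using assms unfolding chains_def prec_def successively_map by simp
  from successively_less_uniform_gap[OF this] show ?thesis
    using that unfolding successively_map by blast
qed

lemma S_C_0_le_SUP_grid_S:
  fixes \<xi> :: "'w \<Rightarrow> 'd1::finite pt set" and z :: "real ^ 'd1"
  assumes sub: "\<xi> \<omega> \<subseteq> UNIV \<times> latt d2" and fin: "\<And>m e. finite (\<xi> \<omega> \<inter> grid_cell d2 m e)"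
  shows "S_C d2 0 (\<xi> \<omega>) z \<le> (SUP n. grid_S d2 \<xi> (1 / real (Suc n)) z \<omega>)"
  unfolding S_C_def
proof (rule SUP_least)
  fix ws assume ws: "ws \<in> chains 0 (\<xi> \<omega>) z"
  obtain \<delta> where \<delta>: "\<delta> > 0" "successively (\<lambda>a b. \<forall>i. fst a $ i + \<delta> \<le> fst b $ i) (ws @ [zpt z])"
    using chains_0_uniform_gap[OF ws] .
  obtain n where n: "(1 / real (Suc n)) powr (1 / real CARD('d1)) < \<delta> / 2"
    using ex_inverse_Suc_powr_less[of "1 / real CARD('d1)" "\<delta> / 2"] \<delta>(1) by auto
  obtain k where k: "inverse (real (Suc k)) < \<delta> / 4"
    using reals_Archimedean[of "\<delta> / 4"] \<delta>(1) by auto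
  define m where "m = Suc k"
  define t where "t = map (grid_index d2 m) ws"
  have "1 / real m < \<delta> / 4"
    using k by (simp add: m_def inverse_eq_divide)
  then have "2 / real m + (1 / real (Suc n)) powr (1 / real CARD('d1)) \<le> \<delta>"
    using n by (simp add: field_simps)
  then have chain: "grid_chain (1 / real (Suc n)) z m t"
    unfolding t_def using \<delta>(2) ws
    by (intro grid_chain_grid_index) (auto simp: chains_def m_def)
  have cells: "w \<in> \<xi> \<omega> \<inter> grid_cell d2 m (grid_index d2 m w)" if "w \<in> set ws" for w
    using ws that sub mem_grid_cell_grid_index[of m w d2] unfolding chains_def m_def by auto
  have "0 < card (\<xi> \<omega> \<inter> grid_cell d2 m (grid_index d2 m w))" if "w \<in> set ws" for w
    using cells[OF that] fin by (auto simp: card_gt_0_iff)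
  then have occ: "occupied d2 \<xi> m t \<omega>"
    unfolding occupied_def count_in_def t_def by auto
  have "map snd ws = map snd (map (\<lambda>e. (0::real ^ 'd1, lattice_point d2 (snd e))) t)"
    using cells by (auto simp: t_def grid_cell_iff)
  from Vcost_cong_snd[OF this]
  have "ennreal (real (length ws) - Vcost d2 z ws) = grid_value d2 z t"
    unfolding grid_value_def by (simp add: t_def)
  also have "\<dots> \<le> grid_S d2 \<xi> (1 / real (Suc n)) z \<omega>"
    unfolding grid_S_def using chain occ by (intro SUP_upper2[of "(m, t)"]) auto
  also have "\<dots> \<le> (SUP n. grid_S d2 \<xi> (1 / real (Suc n)) z \<omega>)"
    by (rule SUP_upper) simp
  finally show "ennreal (real (length ws) - Vcost d2 z ws) \<le> \<dots>" .
qed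

lemma ES_0_eq_SUP:
  assumes pp: "poisson_pp d2 M \<xi>"
  shows "ES d2 M \<xi> 0 z = (SUP n. ES d2 M \<xi> (1 / real (Suc n)) z)"
proof (rule antisym)
  have "AE \<omega> in M. S_C d2 0 (\<xi> \<omega>) z \<le> (SUP n. grid_S d2 \<xi> (1 / real (Suc n)) z \<omega>)"
    using AE_space poisson_pp_AE_finite_grid_cells[OF pp]
  proof eventually_elim
    case (elim \<omega>)
    moreover have "\<xi> \<omega> \<subseteq> UNIV \<times> latt d2"
      using pp elim(1) unfolding poisson_pp_def by blast
    ultimately show ?case
      by (intro S_C_0_le_SUP_grid_S) auto
  qed
  then have "ES d2 M \<xi> 0 z \<le> (\<integral>\<^sup>+\<omega>. (SUP n. grid_S d2 \<xi> (1 / real (Suc n)) z \<omega>) \<partial>M)"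
    unfolding ES_def by (rule nn_integral_mono_AE)
  also have "\<dots> = (SUP n. \<integral>\<^sup>+\<omega>. grid_S d2 \<xi> (1 / real (Suc n)) z \<omega> \<partial>M)"
    by (intro nn_integral_monotone_convergence_SUP incseq_SucI le_funI grid_S_antimono
        grid_S_measurable[OF pp]) (auto simp: field_simps)
  also have "\<dots> \<le> (SUP n. ES d2 M \<xi> (1 / real (Suc n)) z)"
    unfolding ES_def by (intro SUP_mono' nn_integral_mono grid_S_le_S_C)
  finally show "ES d2 M \<xi> 0 z \<le> (SUP n. ES d2 M \<xi> (1 / real (Suc n)) z)" .
  show "(SUP n. ES d2 M \<xi> (1 / real (Suc n)) z) \<le> ES d2 M \<xi> 0 z"
    by (intro SUP_least ES_antimono) auto
qed

lemma sigma_C_0_eq_SUP: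
  assumes "poisson_pp d2 M \<xi>"
  shows "sigma_C d2 M \<xi> 0 z = (SUP n. sigma_C d2 M \<xi> (1 / real (Suc n)) z)"
proof -
  have "sigma_C d2 M \<xi> 0 z = (SUP t\<in>{0<..}. SUP n. ES d2 M \<xi> (1 / real (Suc n)) (t *\<^sub>R z) / ennreal t)"
    unfolding sigma_C_def ES_0_eq_SUP[OF assms] SUP_divide_ennreal ..
  also have "\<dots> = (SUP n. sigma_C d2 M \<xi> (1 / real (Suc n)) z)"
    unfolding sigma_C_def by (rule SUP_commute)
  finally show ?thesis .
qed

theorem mainTheorem9:
  fixes d2 :: nat and M :: "'w measure" and \<xi> :: "'w \<Rightarrow> 'd1::finite pt set"
    and z :: "real ^ 'd1"
  assumes "poisson_pp d2 M \<xi>"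
    and "\<forall>i. 0 < z $ i"
  shows "(\<forall>\<alpha> \<beta>. 0 \<le> \<alpha> \<longrightarrow> \<alpha> \<le> \<beta> \<longrightarrow> ES d2 M \<xi> \<beta> z \<le> ES d2 M \<xi> \<alpha> z)
       \<and> (\<forall>\<alpha> \<beta>. 0 \<le> \<alpha> \<longrightarrow> \<alpha> \<le> \<beta> \<longrightarrow> sigma_C d2 M \<xi> \<beta> z \<le> sigma_C d2 M \<xi> \<alpha> z)
       \<and> ((\<lambda>\<alpha>. ES d2 M \<xi> \<alpha> z) \<longlongrightarrow> ES d2 M \<xi> 0 z) (at_right 0)
       \<and> ((\<lambda>\<alpha>. sigma_C d2 M \<xi> \<alpha> z) \<longlongrightarrow> sigma_C d2 M \<xi> 0 z) (at_right 0)"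
  using ES_antimono sigma_C_antimono
    tendsto_at_right_0_antimono_SUP[OF ES_antimono ES_0_eq_SUP[OF assms(1)]]
    tendsto_at_right_0_antimono_SUP[OF sigma_C_antimono sigma_C_0_eq_SUP[OF assms(1)]]
  by blast

end
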